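(* Let $\tau$ be a positive random variable with finite mean such that $t\mapsto\mathbb P(\tau\ge t)$ is continuous and $\mathbb P(\tau>t+s)\le\mathbb P(\tau>t)\,\mathbb P(\tau>s)$ for all $t,s\ge0$. Then $\mathbb P(\tau<t)\le e\,t/\mathbb E(\tau)$ for all $t>0$. *)

theory Defs
  imports "HOL-Probability.Probability"
begin

end

theory Submission
  imports Defs
begin

(*
  Let E = E(tau), t > 0 and g = P(tau > t).  Submultiplicativity of the tail
  iterates to P(tau > n t) \<le> g^n.  Slicing the half-line into intervals of
  length t gives the discrete layer-cake bound E \<le> t * \<Sum>n. P(tau > n t),
  hence E \<le> t * \<Sum>n. g^n = t / (1 - g), i.e. E * P(tau \<le> t) \<le> t.
  Since P(tau < t) \<le> P(tau \<le> t) and E > 0, this yields P(tau < t) \<le> t / E,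
  which is even sharper than the claimed bound e t / E.
*)

lemma le_suminf_steps:
  fixes x t :: real
  assumes "t > 0"
  shows "ennreal x \<le> (\<Sum>n. ennreal t * indicator {y. y > real n * t} x)"
proof -
  define N where "N = nat \<lceil>x / t\<rceil>"
  have "x / t \<le> real N" unfolding N_def by linarith
  hence x_le: "x \<le> real N * t" using assms by (simp add: field_simps)
  have below: "real n * t < x" if "n < N" for n
  proof -
    have "real n < x / t" using that unfolding N_def by linarith
    thus ?thesis using assms by (simp add: field_simps)
  qed
  have "(\<Sum>n<N. ennreal t * indicator {y. y > real n * t} x) = (\<Sum>n<N. ennreal t)"
    using below by (intro sum.cong) auto
  also have "\<dots> = ennreal (real N * t)"
    using assms by (simp add: ennreal_mult ennreal_of_nat_eq_real_of_nat)
  finally have "ennreal x \<le> (\<Sum>n<N. ennreal t * indicator {y. y > real n * t} x)"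
    using x_le by (simp add: ennreal_leI)
  also have "\<dots> \<le> (\<Sum>n. ennreal t * indicator {y. y > real n * t} x)"
    by (rule sum_le_suminf) auto
  finally show ?thesis .
qed

lemma nn_integral_le_suminf_tails:
  fixes X :: "'a \<Rightarrow> real" and t :: real
  assumes X: "X \<in> borel_measurable M" and t: "t > 0"
  shows "(\<integral>\<^sup>+ x. ennreal (X x) \<partial>M)
           \<le> (\<Sum>n. ennreal t * emeasure M {x\<in>space M. X x > real n * t})"
proof -
  define f where "f n x = ennreal t * indicator {y\<in>space M. X y > real n * t} x" for n x
  have f_meas: "f n \<in> borel_measurable M" for n unfolding f_def using X by measurable
  have "(\<integral>\<^sup>+ x. ennreal (X x) \<partial>M) \<le> (\<integral>\<^sup>+ x. (\<Sum>n. f n x) \<partial>M)"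
    using le_suminf_steps[OF t] by (intro nn_integral_mono) (simp add: f_def indicator_def)
  also have "\<dots> = (\<Sum>n. integral\<^sup>N M (f n))" by (rule nn_integral_suminf[OF f_meas])
  also have "\<dots> = (\<Sum>n. ennreal t * emeasure M {x\<in>space M. X x > real n * t})"
    unfolding f_def using X by (simp add: nn_integral_cmult_indicator)
  finally show ?thesis .
qed

context prob_space
begin

lemma submultiplicative_tail_power:
  fixes X :: "'a \<Rightarrow> real" and t :: real
  assumes submult: "\<And>s. s \<ge> 0 \<Longrightarrow>
      prob {x\<in>space M. X x > s + t} \<le> prob {x\<in>space M. X x > s} * prob {x\<in>space M. X x > t}"
    and t: "t \<ge> 0"
  shows "prob {x\<in>space M. X x > real n * t} \<le> prob {x\<in>space M. X x > t} ^ n"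
proof (induction n)
  case 0
  show ?case by simp
next
  case (Suc n)
  have "prob {x\<in>space M. X x > real (Suc n) * t} = prob {x\<in>space M. X x > real n * t + t}"
    by (simp add: algebra_simps)
  also have "\<dots> \<le> prob {x\<in>space M. X x > real n * t} * prob {x\<in>space M. X x > t}"
    using submult t by simp
  also have "\<dots> \<le> prob {x\<in>space M. X x > t} ^ n * prob {x\<in>space M. X x > t}"
    using Suc by (intro mult_right_mono) auto
  finally show ?case by (simp add: mult.commute)
qed

lemma mean_times_prob_le_step:
  fixes X :: "'a \<Rightarrow> real" and t :: real
  assumes X: "X \<in> borel_measurable M" and nonneg: "\<And>x. x \<in> space M \<Longrightarrow> X x \<ge> 0"
    and int: "integrable M X" and t: "t > 0"
    and decay: "\<And>n. prob {x\<in>space M. X x > real n * t} \<le> prob {x\<in>space M. X x > t} ^ n"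
  shows "expectation X * (1 - prob {x\<in>space M. X x > t}) \<le> t"
proof -
  define g where "g = prob {x\<in>space M. X x > t}"
  show ?thesis
  proof (cases "g < 1")
    case False
    hence "g = 1" using prob_le_1 unfolding g_def by (metis antisym not_less)
    thus ?thesis using t unfolding g_def by simp
  next
    case True
    have g0: "g \<ge> 0" unfolding g_def by simp
    have "ennreal (expectation X) = (\<integral>\<^sup>+ x. ennreal (X x) \<partial>M)"
      using int nonneg by (subst nn_integral_eq_integral) auto
    also have "\<dots> \<le> (\<Sum>n. ennreal t * emeasure M {x\<in>space M. X x > real n * t})"
      by (rule nn_integral_le_suminf_tails[OF X t])
    also have "\<dots> \<le> (\<Sum>n. ennreal (t * g ^ n))"
    proof (intro suminf_le allI)
      fix n
      have "emeasure M {x\<in>space M. X x > real n * t} \<le> ennreal (g ^ n)"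
        using decay[of n] unfolding g_def by (simp add: emeasure_eq_measure ennreal_leI)
      thus "ennreal t * emeasure M {x\<in>space M. X x > real n * t} \<le> ennreal (t * g ^ n)"
        using t g0 by (simp add: ennreal_mult mult_left_mono)
    qed auto
    also have "\<dots> = ennreal (t * (1 / (1 - g)))"
      using g0 True t by (intro suminf_ennreal_eq sums_mult geometric_sums) auto
    finally have "expectation X \<le> t / (1 - g)" using True t by (simp add: ennreal_le_iff)
    thus ?thesis using True unfolding g_def by (simp add: field_simps)
  qed
qed

lemma expectation_pos:
  fixes X :: "'a \<Rightarrow> real"
  assumes int: "integrable M X" and pos: "\<And>x. x \<in> space M \<Longrightarrow> X x > 0"
  shows "expectation X > 0"
proof (rule ccontr)
  assume "\<not> expectation X > 0"
  moreover have "expectation X \<ge> 0" using pos by (intro integral_nonneg_AE) (auto intro: less_imp_le)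
  ultimately have "expectation X = 0" by simp
  hence "AE x in M. X x = 0"
    using integral_nonneg_eq_0_iff_AE[OF int] pos by (auto intro: less_imp_le)
  moreover have "AE x in M. X x > 0" using pos by (intro AE_I2) auto
  ultimately have "AE x in M. False" by eventually_elim auto
  thus False by simp
qed

end

theorem mainTheorem8:
  fixes M :: "'a measure" and \<tau> :: "'a \<Rightarrow> real"
  assumes "prob_space M"
    and meas: "\<tau> \<in> borel_measurable M"
    and pos: "\<forall>x\<in>space M. \<tau> x > 0"
    and int: "integrable M \<tau>"
    and cont: "continuous_on UNIV (\<lambda>t. measure M {x\<in>space M. \<tau> x \<ge> t})"
    and submult: "\<And>t s. t \<ge> 0 \<Longrightarrow> s \<ge> 0 \<Longrightarrow>
       measure M {x\<in>space M. \<tau> x > t + s}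
         \<le> measure M {x\<in>space M. \<tau> x > t} * measure M {x\<in>space M. \<tau> x > s}"
  shows "\<And>t. t > 0 \<Longrightarrow>
     measure M {x\<in>space M. \<tau> x < t} \<le> exp 1 * t / integral\<^sup>L M \<tau>"
proof -
  interpret P: prob_space M by fact
  fix t :: real assume t: "t > 0"
  define E where "E = integral\<^sup>L M \<tau>"
  have E_pos: "E > 0" unfolding E_def using P.expectation_pos[OF int] pos by blast
  have "E * (1 - P.prob {x\<in>space M. \<tau> x > t}) \<le> t"
    unfolding E_def using meas pos int t submult
    by (intro P.mean_times_prob_le_step P.submultiplicative_tail_power) (auto intro: less_imp_le)
  moreover have "P.prob {x\<in>space M. \<tau> x < t} \<le> 1 - P.prob {x\<in>space M. \<tau> x > t}"
  proof -
    have "P.prob {x\<in>space M. \<tau> x < t} + P.prob {x\<in>space M. \<tau> x > t}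
        = P.prob ({x\<in>space M. \<tau> x < t} \<union> {x\<in>space M. \<tau> x > t})"
      using meas by (subst P.finite_measure_Union) auto
    thus ?thesis
      using P.prob_le_1[of "{x\<in>space M. \<tau> x < t} \<union> {x\<in>space M. \<tau> x > t}"] by linarith
  qed
  ultimately have "E * P.prob {x\<in>space M. \<tau> x < t} \<le> t"
    using E_pos by (meson order_trans mult_left_mono less_imp_le)
  hence "P.prob {x\<in>space M. \<tau> x < t} \<le> t / E" using E_pos by (simp add: field_simps)
  also have "\<dots> \<le> exp 1 * t / E" using t E_pos by (simp add: divide_right_mono)
  finally show "P.prob {x\<in>space M. \<tau> x < t} \<le> exp 1 * t / integral\<^sup>L M \<tau>"
    unfolding E_def .
qed

end
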